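(* Consider $N$ agents $\mathcal{V}=\{1,\dots,N\}$ interacting over a fixed graph in which agent $i$ has the nonempty neighbor set $\mathcal{N}_i$ of cardinality $n_i$. Let $\beta\in[0,1)$ and let $(q_p(k))_{k\ge0}$ be any sequence with values in $\{-1,1\}$. The opinions evolve by $$\theta_i(k+1)=\theta_i(k)+\bigl(1-\theta_i(k)^2\bigr)\Bigl[\beta\bigl(q_p(k)-\theta_i(k)\bigr)+(1-\beta)\frac{1}{n_i}\sum_{j\in\mathcal{N}_i}\bigl(q_j(k)-\theta_i(k)\bigr)\Bigr],$$ with actions $q_j(k)=1$ if $\theta_j(k)>0$ or ($\theta_j(k)=0$ and $q_j(k-1)=1$), and $q_j(k)=-1$ if $\theta_j(k)<0$ or ($\theta_j(k)=0$ and $q_j(k-1)=-1$), and with $\theta_j(0)\in(-1,1)\setminus\{0\}$ for all $j$. If $A\subset\mathcal{V}$ is a strongly robust polarized cluster, then $q_i(k)=q_i(0)$ for all $i\in A$ and all $k\in\mathbb{N}$.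
   Context: The neighbor set $\mathcal{N}_i$ consists of the agents $j$ with $(j,i)$ an edge of the graph. A subset $A\subset\mathcal{V}$ is a strongly robust polarized cluster if (i) $q_i(0)=q_j(0)$ for all $i,j\in A$, and (ii) for all $i\in A$, $|\mathcal{N}_i\cap A|\ge|\mathcal{N}_i\setminus A|+\frac{\beta}{1-\beta}|\mathcal{N}_i|$. *)

theory Defs
  imports Complex_Main
begin

definition nbrs :: "nat \<Rightarrow> (nat \<times> nat) set \<Rightarrow> nat \<Rightarrow> nat set" where
  "nbrs N E i = {j \<in> {1..N}. (j, i) \<in> E}"

definition strongly_robust_polarized_cluster ::
    "nat \<Rightarrow> (nat \<times> nat) set \<Rightarrow> real \<Rightarrow> (nat \<Rightarrow> real) \<Rightarrow> nat set \<Rightarrow> bool" where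
  "strongly_robust_polarized_cluster N E \<beta> q0 A \<longleftrightarrow>
     A \<subseteq> {1..N} \<and>
     (\<forall>i\<in>A. \<forall>j\<in>A. q0 i = q0 j) \<and>
     (\<forall>i\<in>A. real (card (nbrs N E i \<inter> A))
              \<ge> real (card (nbrs N E i - A)) + \<beta> / (1 - \<beta>) * real (card (nbrs N E i)))"

definition opinion_dynamics ::
    "nat \<Rightarrow> (nat \<times> nat) set \<Rightarrow> real \<Rightarrow> (nat \<Rightarrow> real) \<Rightarrow>
     (nat \<Rightarrow> nat \<Rightarrow> real) \<Rightarrow> (nat \<Rightarrow> nat \<Rightarrow> real) \<Rightarrow> bool" where
  "opinion_dynamics N E \<beta> qp theta q \<longleftrightarrow>
     (\<forall>i\<in>{1..N}. theta 0 i \<in> {-1<..<1} - {0}) \<and>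
     (\<forall>k. \<forall>i\<in>{1..N}. theta (Suc k) i =
        theta k i + (1 - (theta k i)^2) *
          (\<beta> * (qp k - theta k i)
           + (1 - \<beta>) * (1 / real (card (nbrs N E i))) *
               (\<Sum>j\<in>nbrs N E i. q k j - theta k i))) \<and>
     (\<forall>k. \<forall>j\<in>{1..N}. theta k j > 0 \<longrightarrow> q k j = 1) \<and>
     (\<forall>k. \<forall>j\<in>{1..N}. theta k j < 0 \<longrightarrow> q k j = -1) \<and>
     (\<forall>k. \<forall>j\<in>{1..N}. theta (Suc k) j = 0 \<longrightarrow> q (Suc k) j = q k j)"

end

theory Submission
  imports Defs
begin

text \<open>Let \<open>c \<in> {-1, 1}\<close> be the common initial action of the cluster \<open>A\<close>. Every agent of
  \<open>A\<close> is pushed towards \<open>c\<close> by the weighted average \<open>s\<close> of the external signal and its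
  neighbours' actions: the robustness inequality makes the majority of neighbours acting \<open>c\<close>
  outweigh both the dissenting neighbours and the external signal, so \<open>0 \<le> c s \<le> 1\<close>. The
  update \<open>t \<mapsto> t + (1 - t\<^sup>2) (s - t)\<close> maps the half interval between \<open>0\<close> and \<open>c\<close> into itself
  for such \<open>s\<close>, hence no opinion in \<open>A\<close> ever crosses to the other side of \<open>0\<close>, and actions,
  which only change on a strict sign change of the opinion, stay equal to \<open>c\<close>.\<close>

lemma update_mem_unit_interval:
  fixes t s :: real
  assumes "0 \<le> t" "t \<le> 1" "0 \<le> s" "s \<le> 1"
  shows "0 \<le> t + (1 - t\<^sup>2) * (s - t)" and "t + (1 - t\<^sup>2) * (s - t) \<le> 1"
proof -
  have "0 \<le> 1 - t\<^sup>2" using assms by (simp add: power_le_one)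
  then have low: "(1 - t\<^sup>2) * (0 - t) \<le> (1 - t\<^sup>2) * (s - t)"
    and high: "(1 - t\<^sup>2) * (s - t) \<le> (1 - t\<^sup>2) * (1 - t)"
    using assms by (intro mult_left_mono; simp)+
  have "t + (1 - t\<^sup>2) * (0 - t) = t ^ 3"
    by (simp add: algebra_simps power3_eq_cube power2_eq_square)
  moreover have "1 - (t + (1 - t\<^sup>2) * (1 - t)) = (1 - t) * t\<^sup>2"
    by (simp add: algebra_simps power3_eq_cube power2_eq_square)
  moreover have "0 \<le> t ^ 3" "0 \<le> (1 - t) * t\<^sup>2" using assms by simp_all
  ultimately show "0 \<le> t + (1 - t\<^sup>2) * (s - t)" "t + (1 - t\<^sup>2) * (s - t) \<le> 1"
    using low high by linarith+
qed

lemma update_keeps_side: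
  fixes c t s :: real
  assumes "c \<in> {-1, 1}" "0 \<le> c * t" "c * t \<le> 1" "0 \<le> c * s" "c * s \<le> 1"
  shows "0 \<le> c * (t + (1 - t\<^sup>2) * (s - t))" and "c * (t + (1 - t\<^sup>2) * (s - t)) \<le> 1"
proof -
  have "c * (t + (1 - t\<^sup>2) * (s - t)) = c * t + (1 - (c * t)\<^sup>2) * (c * s - c * t)"
    using assms(1) by (auto simp: algebra_simps)
  then show "0 \<le> c * (t + (1 - t\<^sup>2) * (s - t))" "c * (t + (1 - t\<^sup>2) * (s - t)) \<le> 1"
    using update_mem_unit_interval[OF assms(2-5)] by simp_all
qed

lemma signed_sum_bounds:
  fixes a :: "'a \<Rightarrow> real" and c :: real
  assumes "finite B" "c \<in> {-1, 1}" "\<forall>j\<in>B. a j \<in> {-1, 1}" "\<forall>j\<in>B \<inter> A. a j = c"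
  shows "real (card (B \<inter> A)) - real (card (B - A)) \<le> c * (\<Sum>j\<in>B. a j)"
    and "c * (\<Sum>j\<in>B. a j) \<le> real (card B)"
proof -
  have signs: "c * a j \<in> {-1, 1}" if "j \<in> B" for j
    using assms(2,3) that by auto
  have "c * (\<Sum>j\<in>B. a j) = (\<Sum>j\<in>B \<inter> A. c * a j) + (\<Sum>j\<in>B - A. c * a j)"
    using assms(1) by (simp add: sum_distrib_left sum.Int_Diff)
  also have "(\<Sum>j\<in>B \<inter> A. c * a j) = real (card (B \<inter> A))"
    using assms(2,4) by auto
  finally have split: "c * (\<Sum>j\<in>B. a j) = real (card (B \<inter> A)) + (\<Sum>j\<in>B - A. c * a j)" .
  have "(\<Sum>j\<in>B - A. - 1) \<le> (\<Sum>j\<in>B - A. c * a j)"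
    using signs by (intro sum_mono) fastforce
  then show "real (card (B \<inter> A)) - real (card (B - A)) \<le> c * (\<Sum>j\<in>B. a j)"
    using split by simp
  have "(\<Sum>j\<in>B. c * a j) \<le> (\<Sum>j\<in>B. 1)"
    using signs by (intro sum_mono) fastforce
  then show "c * (\<Sum>j\<in>B. a j) \<le> real (card B)"
    by (simp add: sum_distrib_left)
qed

lemma robust_drive_keeps_side:
  fixes a :: "'a \<Rightarrow> real" and c p \<beta> :: real
  assumes "finite B" "B \<noteq> {}" "c \<in> {-1, 1}" "p \<in> {-1, 1}" "0 \<le> \<beta>" "\<beta> < 1"
    and "\<forall>j\<in>B. a j \<in> {-1, 1}" "\<forall>j\<in>B \<inter> A. a j = c"
    and robust: "real (card (B \<inter> A)) \<ge> real (card (B - A)) + \<beta> / (1 - \<beta>) * real (card B)"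
  defines "s \<equiv> \<beta> * p + (1 - \<beta>) * (\<Sum>j\<in>B. a j) / real (card B)"
  shows "0 \<le> c * s" and "c * s \<le> 1"
proof -
  define n where "n = real (card B)"
  define m where "m = c * (\<Sum>j\<in>B. a j) / n"
  have "n > 0" using assms(1,2) by (simp add: n_def card_gt_0_iff)
  have "\<beta> * n \<le> (1 - \<beta>) * (real (card (B \<inter> A)) - real (card (B - A)))"
    using robust \<open>\<beta> < 1\<close> by (simp add: n_def field_simps)
  also have "\<dots> \<le> (1 - \<beta>) * (c * (\<Sum>j\<in>B. a j))"
    using signed_sum_bounds(1)[OF assms(1,3,7,8)] \<open>\<beta> < 1\<close> by (intro mult_left_mono) auto
  finally have "\<beta> \<le> (1 - \<beta>) * m"
    using \<open>n > 0\<close> by (simp add: m_def field_simps)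
  moreover have "m \<le> 1"
    using signed_sum_bounds(2)[OF assms(1,3,7,8)] \<open>n > 0\<close> by (simp add: m_def n_def)
  then have "(1 - \<beta>) * m \<le> 1 - \<beta>"
    using mult_left_mono[of m 1 "1 - \<beta>"] \<open>\<beta> < 1\<close> by simp
  moreover have "c * s = \<beta> * (c * p) + (1 - \<beta>) * m"
    by (simp add: s_def m_def n_def algebra_simps)
  moreover have "c * p \<in> {-1, 1}" using assms(3,4) by auto
  ultimately show "0 \<le> c * s" "c * s \<le> 1"
    using \<open>0 \<le> \<beta>\<close> by auto
qed

lemma opinion_dynamicsD:
  assumes "opinion_dynamics N E \<beta> qp theta q" "j \<in> {1..N}"
  shows "theta 0 j \<in> {-1<..<1} - {0}"
    and opinion_update: "theta (Suc k) j = theta k j + (1 - (theta k j)\<^sup>2) *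
          (\<beta> * (qp k - theta k j) + (1 - \<beta>) * (1 / real (card (nbrs N E j))) *
            (\<Sum>l\<in>nbrs N E j. q k l - theta k j))"
    and "theta k j > 0 \<Longrightarrow> q k j = 1"
    and "theta k j < 0 \<Longrightarrow> q k j = -1"
    and "theta (Suc k) j = 0 \<Longrightarrow> q (Suc k) j = q k j"
  using assms unfolding opinion_dynamics_def by blast+

lemma actions_pm1:
  assumes "opinion_dynamics N E \<beta> qp theta q" "j \<in> {1..N}"
  shows "q k j \<in> {-1, 1}"
proof (induction k)
  case 0
  show ?case
    using opinion_dynamicsD[OF assms] by (cases "theta 0 j > 0") auto
next
  case (Suc k)
  then show ?case
    using opinion_dynamicsD[OF assms]
    by (cases "theta (Suc k) j > 0"; cases "theta (Suc k) j < 0") auto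
qed

lemma initial_action_side:
  assumes "opinion_dynamics N E \<beta> qp theta q" "j \<in> {1..N}"
  shows "0 < q 0 j * theta 0 j" and "q 0 j * theta 0 j < 1"
  using opinion_dynamicsD[OF assms] by (cases "theta 0 j > 0"; force)+

lemma action_keeps_side:
  assumes "opinion_dynamics N E \<beta> qp theta q" "j \<in> {1..N}"
    and "c \<in> {-1, 1}" "0 \<le> c * theta (Suc k) j" "q k j = c"
  shows "q (Suc k) j = c"
  using opinion_dynamicsD[OF assms(1,2)] assms(3-5)
  by (cases "theta (Suc k) j > 0"; cases "theta (Suc k) j < 0") (auto simp: zero_le_mult_iff)

lemma opinion_update_drive:
  assumes "opinion_dynamics N E \<beta> qp theta q" "i \<in> {1..N}" "nbrs N E i \<noteq> {}"
  shows "theta (Suc k) i = theta k i + (1 - (theta k i)\<^sup>2) *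
    (\<beta> * qp k + (1 - \<beta>) * (\<Sum>j\<in>nbrs N E i. q k j) / real (card (nbrs N E i)) - theta k i)"
proof -
  have "finite (nbrs N E i)" unfolding nbrs_def by simp
  then have "real (card (nbrs N E i)) > 0" using assms(3) by (simp add: card_gt_0_iff)
  then show ?thesis
    unfolding opinion_update[OF assms(1,2)] by (simp add: sum_subtractf field_simps)
qed

lemma polarized_cluster_keeps_side:
  assumes nonempty: "\<forall>i\<in>{1..N}. nbrs N E i \<noteq> {}"
    and "0 \<le> \<beta>" "\<beta> < 1" "\<forall>k. qp k \<in> {-1, 1}"
    and dyn: "opinion_dynamics N E \<beta> qp theta q"
    and cluster: "strongly_robust_polarized_cluster N E \<beta> (q 0) A"
    and "c \<in> {-1, 1}" "\<forall>i\<in>A. q 0 i = c"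
  shows "\<forall>i\<in>A. 0 \<le> c * theta k i \<and> c * theta k i \<le> 1 \<and> q k i = c"
proof (induction k)
  case 0
  show ?case
  proof
    fix i assume "i \<in> A"
    then have "i \<in> {1..N}" "q 0 i = c"
      using cluster \<open>\<forall>i\<in>A. q 0 i = c\<close> unfolding strongly_robust_polarized_cluster_def by auto
    then show "0 \<le> c * theta 0 i \<and> c * theta 0 i \<le> 1 \<and> q 0 i = c"
      using initial_action_side[OF dyn] by (metis less_eq_real_def)
  qed
next
  case (Suc k)
  show ?case
  proof
    fix i assume "i \<in> A"
    then have i: "i \<in> {1..N}" "real (card (nbrs N E i \<inter> A)) \<ge>
        real (card (nbrs N E i - A)) + \<beta> / (1 - \<beta>) * real (card (nbrs N E i))"
      using cluster unfolding strongly_robust_polarized_cluster_def by auto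
    have "nbrs N E i \<subseteq> {1..N}" unfolding nbrs_def by auto
    then have "finite (nbrs N E i)" "\<forall>j\<in>nbrs N E i. q k j \<in> {-1, 1}"
      using actions_pm1[OF dyn] finite_subset by blast+
    moreover have "\<forall>j\<in>nbrs N E i \<inter> A. q k j = c" using Suc by blast
    moreover define s where
      "s = \<beta> * qp k + (1 - \<beta>) * (\<Sum>j\<in>nbrs N E i. q k j) / real (card (nbrs N E i))"
    ultimately have "0 \<le> c * s" "c * s \<le> 1"
      using robust_drive_keeps_side[of _ c "qp k" \<beta> "q k" A] nonempty i assms(2-4,7) by auto
    moreover have "0 \<le> c * theta k i" "c * theta k i \<le> 1" "q k i = c"
      using Suc \<open>i \<in> A\<close> by auto
    moreover have "theta (Suc k) i = theta k i + (1 - (theta k i)\<^sup>2) * (s - theta k i)"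
      unfolding s_def by (rule opinion_update_drive[OF dyn i(1) nonempty[rule_format, OF i(1)]])
    ultimately have "0 \<le> c * theta (Suc k) i" "c * theta (Suc k) i \<le> 1"
      using update_keeps_side[OF \<open>c \<in> {-1, 1}\<close>] by simp_all
    then show "0 \<le> c * theta (Suc k) i \<and> c * theta (Suc k) i \<le> 1 \<and> q (Suc k) i = c"
      using action_keeps_side[OF dyn i(1) \<open>c \<in> {-1, 1}\<close> _ \<open>q k i = c\<close>] by blast
  qed
qed

theorem mainTheorem6:
  fixes N :: nat and E :: "(nat \<times> nat) set" and \<beta> :: real
    and qp :: "nat \<Rightarrow> real" and theta q :: "nat \<Rightarrow> nat \<Rightarrow> real" and A :: "nat set"
  assumes "\<forall>i\<in>{1..N}. nbrs N E i \<noteq> {}"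
    and "0 \<le> \<beta>" and "\<beta> < 1"
    and "\<forall>k. qp k \<in> {-1, 1}"
    and "opinion_dynamics N E \<beta> qp theta q"
    and "strongly_robust_polarized_cluster N E \<beta> (q 0) A"
  shows "\<forall>i\<in>A. \<forall>k. q k i = q 0 i"
proof (intro ballI allI)
  fix i k assume i: "i \<in> A"
  have AV: "A \<subseteq> {1..N}" and same: "\<forall>j\<in>A. q 0 j = q 0 i"
    using assms(6) i unfolding strongly_robust_polarized_cluster_def by blast+
  have pm: "q 0 i \<in> {-1, 1}"
    using actions_pm1[OF assms(5)] i AV by blast
  show "q k i = q 0 i"
    using polarized_cluster_keeps_side[OF assms pm same] i by blast
qed

end
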